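(* Let $q\in(0,1)$ and let $\{J_n\}_{n\ge1}$ be a sequence of random subsets of $\mathbb Z_{\ge0}$ (nonempty). Define $\eta_n=-\min(J_n)$ and $\phi_{n,x}=\prod_{j\in J_n}\frac{1}{1+q^{x+j}}$ for $n\ge1$, $x\in\mathbb R$. Then $\eta_n,\phi_{n,x}$ satisfy: (1) $0\le\phi_{n,x}\le\phi_{n,y}\le1$ for $x\le y$; (2) for every $\varepsilon>0$ there is $M$ with $\phi_{n,x}<\varepsilon$ whenever $\eta_n-x>M$, uniformly in $n,x$; (3) for every $\varepsilon>0$ there is $M$ with $\phi_{n,x}>1-\varepsilon$ whenever $\eta_n-x<-M$, uniformly in $n,x$; (4) there is $c>0$ independent of $n$ with $\phi_{n,x+1}-\phi_{n,x}\ge c$ whenever $x<\eta_n\le x+1$. Consequently the sequences $\{-\min(J_n)\}_{n\ge1}$ and $\{F_n(x)=\mathbb E\prod_{j\in J_n}(1+q^{x+j})^{-1}\}_{n\ge1}$ are asymptotically equivalent as $n\to\infty$.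
   Context: A sequence $\{\eta_n\}_{n\ge1}$ of real random variables spreads if $\lim_{n\to\infty}\sup_{x\in\mathbb R}\mathrm{Prob}\{x<\eta_n\le x+1\}=0$. A sequence $\{F_n\}_{n\ge1}$ of non-decreasing functions $\mathbb R\to\mathbb R$ spreads if $\lim_{n\to\infty}\sup_{x\in\mathbb R}(F_n(x+1)-F_n(x))=0$. A sequence of real random variables $\{\eta_n\}$ and a sequence of non-decreasing functions $\{F_n\}$ are asymptotically equivalent if (i) $\{\eta_n\}$ spreads if and only if $\{F_n\}$ spreads, and (ii) when both spread, $\lim_{n\to\infty}\sup_{x\in\mathbb R}(\mathrm{Prob}\{\eta_n\le x\}-F_n(x))=0$. *)

theory Defs
  imports "HOL-Probability.Probability"
begin

definition spreads_rv :: "'a measure \<Rightarrow> (nat \<Rightarrow> 'a \<Rightarrow> real) \<Rightarrow> bool" where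
  "spreads_rv M \<eta> \<longleftrightarrow>
     (\<lambda>n. SUP x::real. measure M {\<omega> \<in> space M. x < \<eta> n \<omega> \<and> \<eta> n \<omega> \<le> x + 1}) \<longlonglongrightarrow> 0"

definition spreads_fun :: "(nat \<Rightarrow> real \<Rightarrow> real) \<Rightarrow> bool" where
  "spreads_fun F \<longleftrightarrow> (\<lambda>n. SUP x::real. F n (x + 1) - F n x) \<longlonglongrightarrow> 0"

definition asymp_equiv :: "'a measure \<Rightarrow> (nat \<Rightarrow> 'a \<Rightarrow> real) \<Rightarrow> (nat \<Rightarrow> real \<Rightarrow> real) \<Rightarrow> bool" where
  "asymp_equiv M \<eta> F \<longleftrightarrow>
     (spreads_rv M \<eta> \<longleftrightarrow> spreads_fun F) \<and>
     ((spreads_rv M \<eta> \<and> spreads_fun F) \<longrightarrow>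
        (\<lambda>n. SUP x::real. measure M {\<omega> \<in> space M. \<eta> n \<omega> \<le> x} - F n x) \<longlonglongrightarrow> 0)"

end

theory Submission
  imports Defs
begin

text \<open>Let \<open>m = min J\<close>. Splitting off the factor of index \<open>m\<close> writes the product as
  \<open>R(x) / (1 + q powr (x + m))\<close>, where the product \<open>R\<close> over the remaining indices is
  nondecreasing in \<open>x\<close> and lies between \<open>exp (- q powr (x + m + 1) / (1 - q))\<close> and \<open>1\<close>.
  Hence \<open>\<phi> n x\<close> is a sigmoid in \<open>x - \<eta> n\<close> of uniform shape: uniformly small far to the left
  of \<open>\<eta> n\<close>, uniformly close to \<open>1\<close> far to the right, and rising by a fixed amount across the
  unit window containing \<open>\<eta> n\<close>.

  For any random monotone kernel of this shape only a window of bounded length around \<open>x\<close>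
  contributes to \<open>F n (x + 1) - F n x\<close>, so the increments are at most \<open>\<epsilon>\<close> plus a multiple of
  the concentration \<open>sup\<^sub>x P(x < \<eta> n \<le> x + 1)\<close>; conversely the fixed rise bounds the
  concentration by the increments. In the same way \<open>P(\<eta> n \<le> x) - F n x\<close> is at most \<open>\<epsilon>\<close> plus
  a multiple of the concentration, and its supremum is nonnegative since \<open>F n x \<rightarrow> 0\<close> as
  \<open>x \<rightarrow> -\<infinity>\<close>.\<close>

definition qprod :: "real \<Rightarrow> nat set \<Rightarrow> real \<Rightarrow> real" where
  "qprod q J x = (\<Prod>j. if j \<in> J then 1 / (1 + q powr (x + real j)) else 1)"

definition log_factor :: "real \<Rightarrow> nat set \<Rightarrow> real \<Rightarrow> nat \<Rightarrow> real" where
  "log_factor q J x j = (if j \<in> J then ln (1 + q powr (x + real j)) else 0)"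

lemma one_plus_powr_pos: "0 < 1 + (q :: real) powr y"
  by (simp add: add_pos_nonneg)

context
  fixes q :: real
  assumes q_pos: "0 < q" and q_less_1: "q < 1"
begin

lemma log_factor_nonneg: "0 \<le> log_factor q J x j"
  by (simp add: log_factor_def)

lemma log_factor_le: "log_factor q J x j \<le> q powr (x + real j)"
  by (simp add: log_factor_def ln_add_one_self_le_self)

lemma summable_log_factor: "summable (log_factor q J x)"
proof (rule summable_comparison_test)
  show "summable (\<lambda>j. q powr x * q ^ j)"
    using q_pos q_less_1 by (intro summable_mult summable_geometric) auto
  show "\<exists>N. \<forall>j\<ge>N. norm (log_factor q J x j) \<le> q powr x * q ^ j"
    using log_factor_le log_factor_nonneg q_pos by (simp add: powr_add powr_realpow)
qed

lemma log_factor_antimono: "x \<le> y \<Longrightarrow> log_factor q J y j \<le> log_factor q J x j"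
  using q_pos q_less_1 by (simp add: log_factor_def add_pos_nonneg powr_mono')

lemma qprod_eq_exp: "qprod q J x = exp (- suminf (log_factor q J x))"
proof -
  have "qprod q J x = (\<Prod>j. exp (- log_factor q J x j))"
    unfolding qprod_def log_factor_def
    by (rule arg_cong[where f = prodinf]) (auto simp: exp_minus one_plus_powr_pos divide_inverse)
  also have "\<dots> = exp (- suminf (log_factor q J x))"
    using summable_log_factor by (simp add: prodinf_exp summable_minus suminf_minus)
  finally show ?thesis .
qed

lemma qprod_pos: "0 < qprod q J x"
  by (simp add: qprod_eq_exp)

lemma qprod_le_1: "qprod q J x \<le> 1"
  using log_factor_nonneg by (simp add: qprod_eq_exp suminf_nonneg summable_log_factor)

lemma qprod_mono: "x \<le> y \<Longrightarrow> qprod q J x \<le> qprod q J y"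
  by (simp add: qprod_eq_exp suminf_le summable_log_factor log_factor_antimono)

lemma qprod_insert:
  assumes "m \<notin> J"
  shows "qprod q (insert m J) x = qprod q J x / (1 + q powr (x + real m))"
proof -
  have "log_factor q (insert m J) x =
      (\<lambda>j. log_factor q J x j + (if j = m then ln (1 + q powr (x + real m)) else 0))"
    using assms by (auto simp: log_factor_def)
  then have "suminf (log_factor q (insert m J) x) =
      suminf (log_factor q J x) + ln (1 + q powr (x + real m))"
    using summable_log_factor sums_single[of m "\<lambda>_. ln (1 + q powr (x + real m))"]
    by (simp add: suminf_add [symmetric] sums_iff)
  then show ?thesis
    by (simp add: qprod_eq_exp exp_diff one_plus_powr_pos)
qed

lemma qprod_ge:
  assumes "J \<subseteq> {k..}"
  shows "exp (- (q powr (x + real k) / (1 - q))) \<le> qprod q J x"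
proof -
  define g where "g j = (if j < k then 0 else q powr (x + real j))" for j
  have "(\<lambda>i. q powr (x + real k) * q ^ i) sums (q powr (x + real k) / (1 - q))"
    using q_pos q_less_1 geometric_sums[of q] by (simp add: sums_mult divide_inverse)
  moreover have "g (i + k) = q powr (x + real k) * q ^ i" for i
    using q_pos by (simp add: g_def powr_add powr_realpow [symmetric] algebra_simps)
  ultimately have "(\<lambda>i. g (i + k)) sums (q powr (x + real k) / (1 - q))"
    by simp
  then have g_sums: "g sums (q powr (x + real k) / (1 - q))"
    by (subst (asm) sums_iff_shift) (simp add: g_def)
  have "log_factor q J x j \<le> g j" for j
    using assms log_factor_le[of J x j] by (auto simp: g_def log_factor_def)
  then have "suminf (log_factor q J x) \<le> q powr (x + real k) / (1 - q)"
    using g_sums summable_log_factor by (metis sums_unique suminf_le sums_summable)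
  then show ?thesis by (simp add: qprod_eq_exp)
qed

lemma qprod_split_Least:
  assumes "J \<noteq> {}"
  shows "qprod q J x = qprod q (J - {LEAST j. j \<in> J}) x / (1 + q powr (x + real (LEAST j. j \<in> J)))"
proof -
  have "insert (LEAST j. j \<in> J) (J - {LEAST j. j \<in> J}) = J"
    using assms by (auto intro: LeastI)
  then show ?thesis
    using qprod_insert[of "LEAST j. j \<in> J" "J - {LEAST j. j \<in> J}" x] by simp
qed

lemma qprod_remove_Least_ge:
  "exp (- (q * q powr (x + real (LEAST j. j \<in> J)) / (1 - q))) \<le> qprod q (J - {LEAST j. j \<in> J}) x"
proof -
  have "J - {LEAST j. j \<in> J} \<subseteq> {Suc (LEAST j. j \<in> J)..}"
    using Least_le[of "\<lambda>j. j \<in> J"] by (force simp: Suc_le_eq)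
  from qprod_ge[OF this] show ?thesis
    using q_pos by (simp add: powr_add algebra_simps)
qed

lemma qprod_le_Least:
  assumes "J \<noteq> {}"
  shows "qprod q J x \<le> 1 / (1 + q powr (x + real (LEAST j. j \<in> J)))"
  using qprod_split_Least[OF assms] qprod_le_1 one_plus_powr_pos
  by (simp add: divide_right_mono)

lemma qprod_ge_Least:
  assumes "J \<noteq> {}"
  shows "1 - q powr (x + real (LEAST j. j \<in> J)) / (1 - q) \<le> qprod q J x"
proof -
  define a where "a = q powr (x + real (LEAST j. j \<in> J))"
  have "0 \<le> a" by (simp add: a_def)
  have "1 - a / (1 - q) \<le> exp (- (a / (1 - q)))"
    using exp_ge_add_one_self[of "- (a / (1 - q))"] by simp
  also have "\<dots> = exp (- (q * a / (1 - q))) * exp (- a)"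
    using q_less_1 by (simp add: exp_add [symmetric] field_simps)
  also have "\<dots> \<le> qprod q (J - {LEAST j. j \<in> J}) x * (1 / (1 + a))"
  proof (rule mult_mono)
    show "exp (- a) \<le> 1 / (1 + a)"
      using \<open>0 \<le> a\<close> exp_ge_add_one_self[of a] by (simp add: exp_minus field_simps)
  qed (use qprod_remove_Least_ge[of x J] qprod_pos in \<open>auto simp: a_def less_imp_le\<close>)
  also have "\<dots> = qprod q J x"
    by (simp add: qprod_split_Least[OF assms] a_def)
  finally show ?thesis by (simp add: a_def)
qed

lemma qprod_uniformly_small:
  assumes "0 < \<epsilon>"
  shows "\<exists>B. \<forall>J x. J \<noteq> {} \<longrightarrow> - real (LEAST j. j \<in> J) - x > B \<longrightarrow> qprod q J x < \<epsilon>"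
proof (intro exI allI impI)
  fix J x assume "J \<noteq> {}" and "- real (LEAST j. j \<in> J) - x > log q \<epsilon>"
  then have less: "x + real (LEAST j. j \<in> J) < - log q \<epsilon>"
    by linarith
  have "1 / \<epsilon> = q powr (- log q \<epsilon>)"
    using q_pos q_less_1 assms by (simp add: powr_minus_divide)
  also have "\<dots> < q powr (x + real (LEAST j. j \<in> J))"
    using powr_less_mono'[OF q_pos q_less_1 less] .
  finally have "1 / (1 + q powr (x + real (LEAST j. j \<in> J))) < \<epsilon>"
    using assms by (simp add: field_simps add_pos_nonneg)
  with qprod_le_Least[OF \<open>J \<noteq> {}\<close>, of x] show "qprod q J x < \<epsilon>"
    by linarith
qed

lemma qprod_uniformly_near_1:
  assumes "0 < \<epsilon>"
  shows "\<exists>B. \<forall>J x. J \<noteq> {} \<longrightarrow> - real (LEAST j. j \<in> J) - x < - B \<longrightarrow> qprod q J x > 1 - \<epsilon>"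
proof (intro exI allI impI)
  fix J x assume "J \<noteq> {}" and "- real (LEAST j. j \<in> J) - x < - log q (\<epsilon> * (1 - q))"
  then have greater: "log q (\<epsilon> * (1 - q)) < x + real (LEAST j. j \<in> J)"
    by linarith
  have "q powr (x + real (LEAST j. j \<in> J)) < q powr (log q (\<epsilon> * (1 - q)))"
    using powr_less_mono'[OF q_pos q_less_1 greater] .
  also have "\<dots> = \<epsilon> * (1 - q)"
    using q_pos q_less_1 assms by simp
  finally have "q powr (x + real (LEAST j. j \<in> J)) / (1 - q) < \<epsilon>"
    using q_less_1 by (simp add: field_simps)
  with qprod_ge_Least[OF \<open>J \<noteq> {}\<close>, of x] show "qprod q J x > 1 - \<epsilon>"
    by linarith
qed

text \<open>With \<open>a = q powr (x + m) \<in> [1, 1 / q]\<close> the factor of index \<open>m\<close> alone rises by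
  \<open>a (1 - q) / ((1 + q a) (1 + a)) \<ge> (1 - q) / (2 (1 + 1 / q))\<close>, and the remaining product is
  at least \<open>exp (- 1 / (1 - q))\<close>.\<close>
lemma qprod_uniform_jump:
  "\<exists>c>0. \<forall>J x. J \<noteq> {} \<longrightarrow> x < - real (LEAST j. j \<in> J) \<and> - real (LEAST j. j \<in> J) \<le> x + 1 \<longrightarrow>
     qprod q J (x + 1) - qprod q J x \<ge> c"
proof (intro exI conjI allI impI)
  define c where "c = exp (- (1 / (1 - q))) * ((1 - q) / (2 * (1 + 1 / q)))"
  show "0 < c"
    using q_pos q_less_1 by (simp add: c_def add_pos_pos)
  fix J x assume "J \<noteq> {}" and "x < - real (LEAST j. j \<in> J) \<and> - real (LEAST j. j \<in> J) \<le> x + 1"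
  then have lower: "-1 \<le> x + real (LEAST j. j \<in> J)" and upper: "x + real (LEAST j. j \<in> J) < 0"
    by linarith+
  define R where "R y = qprod q (J - {LEAST j. j \<in> J}) y" for y
  define a where "a = q powr (x + real (LEAST j. j \<in> J))"
  have "1 \<le> a"
    using powr_mono'[of "x + real (LEAST j. j \<in> J)" 0 q] upper q_pos q_less_1 by (simp add: a_def)
  have "a \<le> 1 / q"
    using powr_mono'[of "-1" "x + real (LEAST j. j \<in> J)" q] lower q_pos q_less_1
    by (simp add: a_def powr_minus_divide)
  then have "q * a \<le> 1"
    using q_pos by (simp add: field_simps)
  have "exp (- (1 / (1 - q))) \<le> R x"
  proof -
    have "q * a / (1 - q) \<le> 1 / (1 - q)"
      using \<open>q * a \<le> 1\<close> q_less_1 by (simp add: divide_right_mono)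
    then show ?thesis
      using qprod_remove_Least_ge[of x J] unfolding R_def a_def
      by (meson exp_le_cancel_iff neg_le_iff_le order_trans)
  qed
  have "(1 - q) / (2 * (1 + 1 / q)) \<le> a * (1 - q) / ((1 + q * a) * (1 + a))"
    using \<open>1 \<le> a\<close> \<open>a \<le> 1 / q\<close> \<open>q * a \<le> 1\<close> q_pos q_less_1
    by (intro frac_le mult_mono mult_pos_pos add_pos_nonneg) auto
  with \<open>exp (- (1 / (1 - q))) \<le> R x\<close> have "c \<le> R x * (a * (1 - q) / ((1 + q * a) * (1 + a)))"
    unfolding c_def using q_pos q_less_1 qprod_pos[of "J - {LEAST j. j \<in> J}" x]
    by (intro mult_mono) (auto simp: R_def add_pos_pos less_imp_le)
  also have "\<dots> = R x / (1 + q * a) - R x / (1 + a)"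
  proof -
    have "0 < 1 + a" "0 < 1 + q * a"
      using \<open>1 \<le> a\<close> q_pos by (auto intro: add_pos_nonneg)
    then show ?thesis by (simp add: field_simps)
  qed
  also have "\<dots> \<le> R (x + 1) / (1 + q * a) - R x / (1 + a)"
    using qprod_mono[of x "x + 1"] \<open>1 \<le> a\<close> q_pos by (simp add: R_def divide_right_mono)
  also have "\<dots> = qprod q J (x + 1) - qprod q J x"
    using q_pos by (simp add: qprod_split_Least[OF \<open>J \<noteq> {}\<close>] R_def a_def powr_add algebra_simps)
  finally show "qprod q J (x + 1) - qprod q J x \<ge> c" .
qed

lemma measurable_qprod:
  assumes [measurable]: "\<And>k. Measurable.pred M (\<lambda>\<omega>. k \<in> J \<omega>)"
  shows "(\<lambda>\<omega>. qprod q (J \<omega>) x) \<in> borel_measurable M"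
  unfolding qprod_eq_exp log_factor_def by measurable

end

lemma tendsto_zero_if_eps_bound:
  fixes a d :: "'b \<Rightarrow> real"
  assumes d: "(d \<longlongrightarrow> 0) F"
    and bound: "\<And>\<epsilon>. 0 < \<epsilon> \<Longrightarrow> \<exists>C. \<forall>\<^sub>F n in F. \<bar>a n\<bar> \<le> \<epsilon> + C * \<bar>d n\<bar>"
  shows "(a \<longlongrightarrow> 0) F"
proof (rule tendstoI)
  fix e :: real assume "0 < e"
  then obtain C where C: "\<forall>\<^sub>F n in F. \<bar>a n\<bar> \<le> e / 2 + C * \<bar>d n\<bar>"
    using bound half_gt_zero by blast
  have "((\<lambda>n. \<bar>C\<bar> * \<bar>d n\<bar>) \<longlongrightarrow> 0) F"
    by (intro tendsto_mult_right_zero tendsto_rabs_zero d)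
  then have "\<forall>\<^sub>F n in F. \<bar>C\<bar> * \<bar>d n\<bar> < e / 2"
    by (rule order_tendstoD) (use \<open>0 < e\<close> in simp)
  with C show "\<forall>\<^sub>F n in F. dist (a n) 0 < e"
  proof eventually_elim
    case (elim n)
    have "C * \<bar>d n\<bar> \<le> \<bar>C\<bar> * \<bar>d n\<bar>"
      by (simp add: mult_right_mono)
    with elim show ?case by simp
  qed
qed

definition concentration :: "'a measure \<Rightarrow> ('a \<Rightarrow> real) \<Rightarrow> real" where
  "concentration M X = (SUP x. measure M {\<omega> \<in> space M. x < X \<omega> \<and> X \<omega> \<le> x + 1})"

definition max_increment :: "(real \<Rightarrow> real) \<Rightarrow> real" where
  "max_increment G = (SUP x. G (x + 1) - G x)"

lemma spreads_rv_iff_concentration: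
  "spreads_rv M \<eta> \<longleftrightarrow> (\<lambda>n. concentration M (\<eta> n)) \<longlonglongrightarrow> 0"
  by (simp add: spreads_rv_def concentration_def)

lemma spreads_fun_iff_max_increment:
  "spreads_fun F \<longleftrightarrow> (\<lambda>n. max_increment (F n)) \<longlonglongrightarrow> 0"
  by (simp add: spreads_fun_def max_increment_def)

context prob_space
begin

lemma measure_Ioc_le_concentration:
  "measure M {\<omega> \<in> space M. x < X \<omega> \<and> X \<omega> \<le> x + 1} \<le> concentration M X"
  unfolding concentration_def by (rule cSUP_upper) (auto intro!: bdd_aboveI2[where M = 1])

lemma concentration_nonneg: "0 \<le> concentration M X"
  using measure_Ioc_le_concentration[of 0 X] measure_nonneg order_trans by blast

lemma measure_Ioc_le_concentration_nat:
  fixes X :: "'a \<Rightarrow> real"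
  assumes [measurable]: "X \<in> borel_measurable M"
  shows "measure M {\<omega> \<in> space M. x < X \<omega> \<and> X \<omega> \<le> x + real N} \<le> real N * concentration M X"
proof (induction N)
  case 0
  have empty: "{\<omega> \<in> space M. x < X \<omega> \<and> X \<omega> \<le> x + real 0} = {}"
    by auto
  show ?case unfolding empty by simp
next
  case (Suc N)
  have "{\<omega> \<in> space M. x < X \<omega> \<and> X \<omega> \<le> x + real (Suc N)} =
      {\<omega> \<in> space M. x < X \<omega> \<and> X \<omega> \<le> x + real N} \<union>
      {\<omega> \<in> space M. x + real N < X \<omega> \<and> X \<omega> \<le> (x + real N) + 1}"
    by auto
  then have "measure M {\<omega> \<in> space M. x < X \<omega> \<and> X \<omega> \<le> x + real (Suc N)} \<le>
      measure M {\<omega> \<in> space M. x < X \<omega> \<and> X \<omega> \<le> x + real N} +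
      measure M {\<omega> \<in> space M. x + real N < X \<omega> \<and> X \<omega> \<le> (x + real N) + 1}"
    by (simp only:) (rule measure_Un_le; measurable)
  also have "\<dots> \<le> real N * concentration M X + concentration M X"
    using Suc.IH measure_Ioc_le_concentration by (rule add_mono)
  finally show ?case by (simp add: algebra_simps)
qed

lemma measure_Ioc_le_concentration_length:
  fixes X :: "'a \<Rightarrow> real"
  assumes [measurable]: "X \<in> borel_measurable M" and "a \<le> b"
  shows "measure M {\<omega> \<in> space M. a < X \<omega> \<and> X \<omega> \<le> b} \<le> (b - a + 1) * concentration M X"
proof -
  define N where "N = nat \<lceil>b - a\<rceil>"
  have "b \<le> a + real N" "real N \<le> b - a + 1"
    using \<open>a \<le> b\<close> unfolding N_def by linarith+
  then have "measure M {\<omega> \<in> space M. a < X \<omega> \<and> X \<omega> \<le> b}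
      \<le> measure M {\<omega> \<in> space M. a < X \<omega> \<and> X \<omega> \<le> a + real N}"
    by (intro finite_measure_mono) auto
  also have "\<dots> \<le> real N * concentration M X"
    by (rule measure_Ioc_le_concentration_nat) measurable
  also have "\<dots> \<le> (b - a + 1) * concentration M X"
    using \<open>real N \<le> b - a + 1\<close> concentration_nonneg by (rule mult_right_mono)
  finally show ?thesis .
qed

lemma integral_le_const_plus_measure:
  assumes "integrable M g" "A \<in> sets M"
    and "\<And>\<omega>. \<omega> \<in> space M \<Longrightarrow> g \<omega> \<le> c + indicator A \<omega>"
  shows "integral\<^sup>L M g \<le> c + measure M A"
proof -
  have "integrable M (indicator A :: 'a \<Rightarrow> real)"
    using assms(2) by (simp add: less_top [symmetric])
  then have "integral\<^sup>L M g \<le> (\<integral>\<omega>. c + indicator A \<omega> \<partial>M)"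
    using assms by (intro integral_mono) auto
  also have "\<dots> = c + measure M A"
    using \<open>integrable M (indicator A)\<close> assms(2)
    by (simp add: prob_space Int_absorb2 sets.sets_into_space)
  finally show ?thesis .
qed

lemma cdf_tendsto_at_bot:
  fixes X :: "'a \<Rightarrow> real"
  assumes "X \<in> borel_measurable M"
  shows "((\<lambda>y. measure M {\<omega> \<in> space M. X \<omega> \<le> y}) \<longlongrightarrow> 0) at_bot"
proof -
  have "cdf (distr M borel X) = (\<lambda>y. measure M {\<omega> \<in> space M. X \<omega> \<le> y})"
    using assms by (auto simp: fun_eq_iff cdf_def measure_distr vimage_def Int_def conj_commute)
  then show ?thesis
    using finite_borel_measure.cdf_lim_at_bot[OF real_distribution.finite_borel_measure_M,
        OF real_distribution_distr[OF assms]] by simp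
qed

end

locale averaged_monotone_kernel = prob_space +
  fixes X :: "'a \<Rightarrow> real" and f :: "real \<Rightarrow> 'a \<Rightarrow> real" and G :: "real \<Rightarrow> real"
  assumes measurable_X [measurable]: "X \<in> borel_measurable M"
    and measurable_f [measurable]: "\<And>x. f x \<in> borel_measurable M"
    and f_nonneg: "\<And>x \<omega>. \<omega> \<in> space M \<Longrightarrow> 0 \<le> f x \<omega>"
    and f_le_1: "\<And>x \<omega>. \<omega> \<in> space M \<Longrightarrow> f x \<omega> \<le> 1"
    and f_mono: "\<And>x y \<omega>. \<omega> \<in> space M \<Longrightarrow> x \<le> y \<Longrightarrow> f x \<omega> \<le> f y \<omega>"
    and G_eq: "\<And>x. G x = (\<integral>\<omega>. f x \<omega> \<partial>M)"
begin

lemma integrable_f: "integrable M (f x)"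
  using f_nonneg f_le_1 by (intro integrable_const_bound[where B = 1]) auto

lemma G_nonneg: "0 \<le> G x"
  unfolding G_eq using f_nonneg by (rule integral_nonneg_AE[OF AE_I2])

lemma G_le_1: "G x \<le> 1"
proof -
  have "G x \<le> (\<integral>\<omega>. 1 \<partial>M)"
    unfolding G_eq using f_le_1 by (intro integral_mono integrable_f) auto
  then show ?thesis by (simp add: prob_space)
qed

lemma G_mono: "x \<le> y \<Longrightarrow> G x \<le> G y"
  unfolding G_eq using f_mono by (intro integral_mono integrable_f) auto

lemma G_increment_eq: "G (x + 1) - G x = (\<integral>\<omega>. f (x + 1) \<omega> - f x \<omega> \<partial>M)"
  by (simp add: G_eq integrable_f)

lemma G_increment_le_max_increment: "G (x + 1) - G x \<le> max_increment G"
proof -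
  have "G (y + 1) - G y \<le> 1" for y
    using G_nonneg[of y] G_le_1[of "y + 1"] by linarith
  then show ?thesis
    unfolding max_increment_def by (intro cSUP_upper bdd_aboveI2[where M = 1]) auto
qed

lemma max_increment_nonneg: "0 \<le> max_increment G"
  using G_mono[of 0 1] G_increment_le_max_increment[of 0] by simp

lemma G_increment_le:
  assumes "0 < \<epsilon>" "0 \<le> B\<^sub>1" "0 \<le> B\<^sub>2"
    and small: "\<And>\<omega> x. \<omega> \<in> space M \<Longrightarrow> B\<^sub>1 < X \<omega> - x \<Longrightarrow> f x \<omega> < \<epsilon>"
    and large: "\<And>\<omega> x. \<omega> \<in> space M \<Longrightarrow> X \<omega> - x < - B\<^sub>2 \<Longrightarrow> 1 - \<epsilon> < f x \<omega>"
  shows "G (x + 1) - G x \<le> \<epsilon> + (B\<^sub>1 + B\<^sub>2 + 3) * concentration M X"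
proof -
  define S where "S = {\<omega> \<in> space M. x - B\<^sub>2 - 1 < X \<omega> \<and> X \<omega> \<le> x + 1 + B\<^sub>1}"
  have [measurable]: "S \<in> sets M"
    unfolding S_def by measurable
  \<comment> \<open>outside \<open>S\<close>, \<open>f x \<omega>\<close> and \<open>f (x + 1) \<omega>\<close> lie within \<open>\<epsilon>\<close> of the same endpoint \<open>0\<close> or \<open>1\<close>\<close>
  have "f (x + 1) \<omega> - f x \<omega> \<le> \<epsilon> + indicator S \<omega>" if "\<omega> \<in> space M" for \<omega>
    using that small[OF that, of "x + 1"] large[OF that, of x] \<open>0 < \<epsilon>\<close>
      f_nonneg[OF that, of x] f_le_1[OF that, of "x + 1"] f_mono[OF that, of x "x + 1"]
    by (cases "\<omega> \<in> S") (auto simp: S_def not_less)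
  then have "G (x + 1) - G x \<le> \<epsilon> + measure M S"
    unfolding G_increment_eq by (intro integral_le_const_plus_measure) (auto simp: integrable_f)
  also have "measure M S \<le> (B\<^sub>1 + B\<^sub>2 + 3) * concentration M X"
    using measure_Ioc_le_concentration_length[of X "x - B\<^sub>2 - 1" "x + 1 + B\<^sub>1"] assms(2,3)
    by (simp add: S_def algebra_simps)
  finally show ?thesis by simp
qed

lemma concentration_le_max_increment:
  assumes "0 < c"
    and jump: "\<And>\<omega> x. \<omega> \<in> space M \<Longrightarrow> x < X \<omega> \<Longrightarrow> X \<omega> \<le> x + 1 \<Longrightarrow> c \<le> f (x + 1) \<omega> - f x \<omega>"
  shows "concentration M X \<le> max_increment G / c"
  unfolding concentration_def
proof (rule cSUP_least)
  fix x
  define A where "A = {\<omega> \<in> space M. x < X \<omega> \<and> X \<omega> \<le> x + 1}"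
  have [measurable]: "A \<in> sets M"
    unfolding A_def by measurable
  have "integrable M (indicator A :: 'a \<Rightarrow> real)"
    by (simp add: less_top [symmetric])
  have "c * measure M A = (\<integral>\<omega>. c * indicator A \<omega> \<partial>M)"
    by (simp add: Int_absorb2 sets.sets_into_space)
  also have "\<dots> \<le> (\<integral>\<omega>. f (x + 1) \<omega> - f x \<omega> \<partial>M)"
  proof (intro integral_mono Bochner_Integration.integrable_diff integrable_f integrable_mult_right)
    fix \<omega> assume "\<omega> \<in> space M"
    then show "c * indicator A \<omega> \<le> f (x + 1) \<omega> - f x \<omega>"
      using jump f_mono[of \<omega> x "x + 1"] by (auto simp: A_def indicator_def)
  qed (use \<open>integrable M (indicator A)\<close> in simp)
  also have "\<dots> \<le> max_increment G"
    using G_increment_le_max_increment by (simp add: G_increment_eq)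
  finally show "measure M A \<le> max_increment G / c"
    using \<open>0 < c\<close> by (simp add: field_simps)
qed simp

lemma cdf_minus_G_le:
  assumes "0 < \<epsilon>" "0 \<le> B"
    and large: "\<And>\<omega> x. \<omega> \<in> space M \<Longrightarrow> X \<omega> - x < - B \<Longrightarrow> 1 - \<epsilon> < f x \<omega>"
  shows "measure M {\<omega> \<in> space M. X \<omega> \<le> x} - G x \<le> \<epsilon> + (B + 2) * concentration M X"
proof -
  define A where "A = {\<omega> \<in> space M. X \<omega> \<le> x}"
  define S where "S = {\<omega> \<in> space M. x - B - 1 < X \<omega> \<and> X \<omega> \<le> x}"
  have [measurable]: "A \<in> sets M" "S \<in> sets M"
    unfolding A_def S_def by measurable
  have "integrable M (indicator A :: 'a \<Rightarrow> real)"
    by (simp add: less_top [symmetric])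
  have "indicator A \<omega> - f x \<omega> \<le> \<epsilon> + indicator S \<omega>" if "\<omega> \<in> space M" for \<omega>
    using that large[OF that, of x] \<open>0 < \<epsilon>\<close> f_nonneg[OF that, of x] f_le_1[OF that, of x]
    by (cases "\<omega> \<in> S") (auto simp: A_def S_def indicator_def not_less)
  then have "(\<integral>\<omega>. indicator A \<omega> - f x \<omega> \<partial>M) \<le> \<epsilon> + measure M S"
    using \<open>integrable M (indicator A)\<close>
    by (intro integral_le_const_plus_measure Bochner_Integration.integrable_diff integrable_f) auto
  also have "(\<integral>\<omega>. indicator A \<omega> - f x \<omega> \<partial>M) = measure M A - G x"
    using \<open>integrable M (indicator A)\<close>
    by (simp add: G_eq integrable_f Int_absorb2 sets.sets_into_space)
  also have "measure M S \<le> (B + 2) * concentration M X"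
    using measure_Ioc_le_concentration_length[of X "x - B - 1" x] \<open>0 \<le> B\<close>
    by (simp add: S_def algebra_simps)
  finally show ?thesis by (simp add: A_def)
qed

lemma G_tendsto_at_bot:
  assumes small: "\<And>\<epsilon>. 0 < \<epsilon> \<Longrightarrow> \<exists>B. \<forall>\<omega>\<in>space M. \<forall>x. B < X \<omega> - x \<longrightarrow> f x \<omega> < \<epsilon>"
  shows "(G \<longlongrightarrow> 0) at_bot"
proof (rule order_tendstoI)
  fix a :: real assume "a < 0"
  then show "\<forall>\<^sub>F x in at_bot. a < G x"
    using G_nonneg by (simp add: less_le_trans)
next
  fix a :: real assume "0 < a"
  then obtain B where B: "\<forall>\<omega>\<in>space M. \<forall>x. B < X \<omega> - x \<longrightarrow> f x \<omega> < a / 2"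
    using small half_gt_zero by blast
  have "\<forall>\<^sub>F y in at_bot. measure M {\<omega> \<in> space M. X \<omega> \<le> y} < a / 2"
    using \<open>0 < a\<close> by (intro order_tendstoD(2)[OF cdf_tendsto_at_bot[OF measurable_X]]) simp
  then obtain y\<^sub>0 where y\<^sub>0: "\<And>y. y \<le> y\<^sub>0 \<Longrightarrow> measure M {\<omega> \<in> space M. X \<omega> \<le> y} < a / 2"
    by (auto simp: eventually_at_bot_linorder)
  show "\<forall>\<^sub>F x in at_bot. G x < a"
    unfolding eventually_at_bot_linorder
  proof (intro exI allI impI)
    fix x assume "x \<le> y\<^sub>0 - B"
    define A where "A = {\<omega> \<in> space M. X \<omega> \<le> x + B}"
    have [measurable]: "A \<in> sets M"
      unfolding A_def by measurable
    have "f x \<omega> \<le> a / 2 + indicator A \<omega>" if "\<omega> \<in> space M" for \<omega>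
      using that B f_le_1[OF that, of x] \<open>0 < a\<close>
      by (cases "\<omega> \<in> A") (auto simp: A_def not_le less_imp_le)
    then have "G x \<le> a / 2 + measure M A"
      unfolding G_eq by (intro integral_le_const_plus_measure integrable_f) auto
    also have "measure M A < a / 2"
      using y\<^sub>0 \<open>x \<le> y\<^sub>0 - B\<close> by (simp add: A_def)
    finally show "G x < a" by simp
  qed
qed

lemma sup_cdf_minus_G_nonneg:
  assumes small: "\<And>\<epsilon>. 0 < \<epsilon> \<Longrightarrow> \<exists>B. \<forall>\<omega>\<in>space M. \<forall>x. B < X \<omega> - x \<longrightarrow> f x \<omega> < \<epsilon>"
  shows "0 \<le> (SUP x. measure M {\<omega> \<in> space M. X \<omega> \<le> x} - G x)"
proof (rule field_le_epsilon)
  fix \<delta> :: real assume "0 < \<delta>"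
  have "\<forall>\<^sub>F x in at_bot. G x < \<delta>"
    using G_tendsto_at_bot[OF small] \<open>0 < \<delta>\<close> by (rule order_tendstoD(2))
  then obtain x where "G x < \<delta>"
    by (auto simp: eventually_at_bot_linorder)
  have "measure M {\<omega> \<in> space M. X \<omega> \<le> y} - G y \<le> 1" for y
    using G_nonneg[of y] by (smt (verit) prob_le_1)
  then have "measure M {\<omega> \<in> space M. X \<omega> \<le> x} - G x \<le> (SUP x. measure M {\<omega> \<in> space M. X \<omega> \<le> x} - G x)"
    by (intro cSUP_upper bdd_aboveI2[where M = 1]) auto
  with \<open>G x < \<delta>\<close> show "0 \<le> (SUP x. measure M {\<omega> \<in> space M. X \<omega> \<le> x} - G x) + \<delta>"
    using measure_nonneg[of M "{\<omega> \<in> space M. X \<omega> \<le> x}"] by linarith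
qed

end

locale kernel_sequence = prob_space +
  fixes \<eta> :: "nat \<Rightarrow> 'a \<Rightarrow> real" and \<phi> :: "nat \<Rightarrow> real \<Rightarrow> 'a \<Rightarrow> real"
    and F :: "nat \<Rightarrow> real \<Rightarrow> real"
  assumes measurable_\<eta>: "\<And>n. 1 \<le> n \<Longrightarrow> \<eta> n \<in> borel_measurable M"
    and measurable_\<phi>: "\<And>n x. 1 \<le> n \<Longrightarrow> \<phi> n x \<in> borel_measurable M"
    and mono: "\<forall>n\<ge>1. \<forall>\<omega>\<in>space M. \<forall>x y. x \<le> y \<longrightarrow>
            0 \<le> \<phi> n x \<omega> \<and> \<phi> n x \<omega> \<le> \<phi> n y \<omega> \<and> \<phi> n y \<omega> \<le> 1"
    and small: "\<forall>\<epsilon>>0. \<exists>B. \<forall>n\<ge>1. \<forall>\<omega>\<in>space M. \<forall>x. \<eta> n \<omega> - x > B \<longrightarrow> \<phi> n x \<omega> < \<epsilon>"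
    and large: "\<forall>\<epsilon>>0. \<exists>B. \<forall>n\<ge>1. \<forall>\<omega>\<in>space M. \<forall>x. \<eta> n \<omega> - x < - B \<longrightarrow> \<phi> n x \<omega> > 1 - \<epsilon>"
    and jump: "\<exists>c>0. \<forall>n\<ge>1. \<forall>\<omega>\<in>space M. \<forall>x. x < \<eta> n \<omega> \<and> \<eta> n \<omega> \<le> x + 1 \<longrightarrow>
            \<phi> n (x + 1) \<omega> - \<phi> n x \<omega> \<ge> c"
    and F_eq: "\<And>n x. F n x = (\<integral>\<omega>. \<phi> n x \<omega> \<partial>M)"
begin

lemma averaged_monotone_kernel: "1 \<le> n \<Longrightarrow> averaged_monotone_kernel M (\<eta> n) (\<phi> n) (F n)"
  using prob_space_axioms mono measurable_\<eta> measurable_\<phi> F_eq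
  by (simp add: averaged_monotone_kernel_def averaged_monotone_kernel_axioms_def) blast

lemma spreads_fun_if_spreads_rv:
  assumes "spreads_rv M \<eta>"
  shows "spreads_fun F"
  unfolding spreads_fun_iff_max_increment
proof (rule tendsto_zero_if_eps_bound)
  show "(\<lambda>n. concentration M (\<eta> n)) \<longlonglongrightarrow> 0"
    using assms by (simp add: spreads_rv_iff_concentration)
  fix \<epsilon> :: real assume "0 < \<epsilon>"
  obtain B\<^sub>1 where
    B\<^sub>1: "\<forall>n\<ge>1. \<forall>\<omega>\<in>space M. \<forall>x. B\<^sub>1 < \<eta> n \<omega> - x \<longrightarrow> \<phi> n x \<omega> < \<epsilon>"
    using small \<open>0 < \<epsilon>\<close> by blast
  obtain B\<^sub>2 where
    B\<^sub>2: "\<forall>n\<ge>1. \<forall>\<omega>\<in>space M. \<forall>x. \<eta> n \<omega> - x < - B\<^sub>2 \<longrightarrow> 1 - \<epsilon> < \<phi> n x \<omega>"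
    using large \<open>0 < \<epsilon>\<close> by blast
  let ?C = "max B\<^sub>1 0 + max B\<^sub>2 0 + 3"
  have "\<forall>\<^sub>F n in sequentially. \<bar>max_increment (F n)\<bar> \<le> \<epsilon> + ?C * \<bar>concentration M (\<eta> n)\<bar>"
    using eventually_ge_at_top[of 1]
  proof eventually_elim
    case (elim n)
    interpret averaged_monotone_kernel M "\<eta> n" "\<phi> n" "F n"
      using elim by (rule averaged_monotone_kernel)
    have "max_increment (F n) \<le> \<epsilon> + ?C * concentration M (\<eta> n)"
      unfolding max_increment_def
      by (rule cSUP_least) (use B\<^sub>1 B\<^sub>2 elim \<open>0 < \<epsilon>\<close> in \<open>auto intro!: G_increment_le\<close>)
    then show ?case
      using max_increment_nonneg concentration_nonneg by simp
  qed
  then show "\<exists>C. \<forall>\<^sub>F n in sequentially. \<bar>max_increment (F n)\<bar> \<le> \<epsilon> + C * \<bar>concentration M (\<eta> n)\<bar>" ..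
qed

lemma spreads_rv_if_spreads_fun:
  assumes "spreads_fun F"
  shows "spreads_rv M \<eta>"
  unfolding spreads_rv_iff_concentration
proof (rule tendsto_zero_if_eps_bound)
  show "(\<lambda>n. max_increment (F n)) \<longlonglongrightarrow> 0"
    using assms by (simp add: spreads_fun_iff_max_increment)
  obtain c where "0 < c" and c: "\<forall>n\<ge>1. \<forall>\<omega>\<in>space M. \<forall>x. x < \<eta> n \<omega> \<and> \<eta> n \<omega> \<le> x + 1 \<longrightarrow>
      c \<le> \<phi> n (x + 1) \<omega> - \<phi> n x \<omega>"
    using jump by blast
  fix \<epsilon> :: real assume "0 < \<epsilon>"
  have "\<forall>\<^sub>F n in sequentially. \<bar>concentration M (\<eta> n)\<bar> \<le> \<epsilon> + 1 / c * \<bar>max_increment (F n)\<bar>"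
    using eventually_ge_at_top[of 1]
  proof eventually_elim
    case (elim n)
    interpret averaged_monotone_kernel M "\<eta> n" "\<phi> n" "F n"
      using elim by (rule averaged_monotone_kernel)
    have "concentration M (\<eta> n) \<le> max_increment (F n) / c"
      using c elim \<open>0 < c\<close> by (intro concentration_le_max_increment) auto
    then show ?case
      using max_increment_nonneg concentration_nonneg \<open>0 < \<epsilon>\<close> by simp
  qed
  then show "\<exists>C. \<forall>\<^sub>F n in sequentially. \<bar>concentration M (\<eta> n)\<bar> \<le> \<epsilon> + C * \<bar>max_increment (F n)\<bar>" ..
qed

lemma sup_cdf_minus_F_tendsto_0:
  assumes "spreads_rv M \<eta>"
  shows "(\<lambda>n. SUP x. measure M {\<omega> \<in> space M. \<eta> n \<omega> \<le> x} - F n x) \<longlonglongrightarrow> 0"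
proof (rule tendsto_zero_if_eps_bound)
  show "(\<lambda>n. concentration M (\<eta> n)) \<longlonglongrightarrow> 0"
    using assms by (simp add: spreads_rv_iff_concentration)
  fix \<epsilon> :: real assume "0 < \<epsilon>"
  then obtain B where
    B: "\<forall>n\<ge>1. \<forall>\<omega>\<in>space M. \<forall>x. \<eta> n \<omega> - x < - B \<longrightarrow> 1 - \<epsilon> < \<phi> n x \<omega>"
    using large by blast
  let ?C = "max B 0 + 2"
  have "\<forall>\<^sub>F n in sequentially. \<bar>SUP x. measure M {\<omega> \<in> space M. \<eta> n \<omega> \<le> x} - F n x\<bar>
      \<le> \<epsilon> + ?C * \<bar>concentration M (\<eta> n)\<bar>"
    using eventually_ge_at_top[of 1]
  proof eventually_elim
    case (elim n)
    interpret averaged_monotone_kernel M "\<eta> n" "\<phi> n" "F n"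
      using elim by (rule averaged_monotone_kernel)
    have "0 \<le> (SUP x. measure M {\<omega> \<in> space M. \<eta> n \<omega> \<le> x} - F n x)"
      using small elim by (intro sup_cdf_minus_G_nonneg) blast
    moreover have "(SUP x. measure M {\<omega> \<in> space M. \<eta> n \<omega> \<le> x} - F n x)
        \<le> \<epsilon> + ?C * concentration M (\<eta> n)"
      by (rule cSUP_least) (use B elim \<open>0 < \<epsilon>\<close> in \<open>auto intro!: cdf_minus_G_le\<close>)
    ultimately show ?case
      using concentration_nonneg by simp
  qed
  then show "\<exists>C. \<forall>\<^sub>F n in sequentially. \<bar>SUP x. measure M {\<omega> \<in> space M. \<eta> n \<omega> \<le> x} - F n x\<bar>
      \<le> \<epsilon> + C * \<bar>concentration M (\<eta> n)\<bar>" ..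
qed

theorem asymp_equiv_sequences: "asymp_equiv M \<eta> F"
  unfolding asymp_equiv_def
  using spreads_fun_if_spreads_rv spreads_rv_if_spreads_fun sup_cdf_minus_F_tendsto_0 by blast

end

theorem corollary5p7:
  fixes M :: "'a measure" and q :: real and J :: "nat \<Rightarrow> 'a \<Rightarrow> nat set"
    and \<eta> :: "nat \<Rightarrow> 'a \<Rightarrow> real" and \<phi> :: "nat \<Rightarrow> real \<Rightarrow> 'a \<Rightarrow> real"
    and F :: "nat \<Rightarrow> real \<Rightarrow> real"
  assumes "prob_space M"
    and "0 < q" "q < 1"
    and meas: "\<And>n k. n \<ge> 1 \<Longrightarrow> {\<omega> \<in> space M. k \<in> J n \<omega>} \<in> sets M"
    and nonempty: "\<And>n \<omega>. n \<ge> 1 \<Longrightarrow> \<omega> \<in> space M \<Longrightarrow> J n \<omega> \<noteq> {}"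
    and eta_def: "\<And>n \<omega>. \<eta> n \<omega> = - real (LEAST j. j \<in> J n \<omega>)"
    and phi_def: "\<And>n x \<omega>. \<phi> n x \<omega> =
        (\<Prod>j. if j \<in> J n \<omega> then 1 / (1 + q powr (x + real j)) else 1)"
    and F_def: "\<And>n x. F n x = (\<integral>\<omega>. \<phi> n x \<omega> \<partial>M)"
  shows "(\<forall>n\<ge>1. \<forall>\<omega>\<in>space M. \<forall>x y. x \<le> y \<longrightarrow>
            0 \<le> \<phi> n x \<omega> \<and> \<phi> n x \<omega> \<le> \<phi> n y \<omega> \<and> \<phi> n y \<omega> \<le> 1)
       \<and> (\<forall>\<epsilon>>0. \<exists>B. \<forall>n\<ge>1. \<forall>\<omega>\<in>space M. \<forall>x. \<eta> n \<omega> - x > B \<longrightarrow> \<phi> n x \<omega> < \<epsilon>)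
       \<and> (\<forall>\<epsilon>>0. \<exists>B. \<forall>n\<ge>1. \<forall>\<omega>\<in>space M. \<forall>x. \<eta> n \<omega> - x < - B \<longrightarrow> \<phi> n x \<omega> > 1 - \<epsilon>)
       \<and> (\<exists>c>0. \<forall>n\<ge>1. \<forall>\<omega>\<in>space M. \<forall>x. x < \<eta> n \<omega> \<and> \<eta> n \<omega> \<le> x + 1 \<longrightarrow>
            \<phi> n (x + 1) \<omega> - \<phi> n x \<omega> \<ge> c)
       \<and> asymp_equiv M \<eta> F"
proof -
  note q = \<open>0 < q\<close> \<open>q < 1\<close>
  have \<phi>_eq: "\<phi> n x \<omega> = qprod q (J n \<omega>) x" for n x \<omega>
    by (simp add: phi_def qprod_def)
  have mono: "\<forall>n\<ge>1. \<forall>\<omega>\<in>space M. \<forall>x y. x \<le> y \<longrightarrow>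
      0 \<le> \<phi> n x \<omega> \<and> \<phi> n x \<omega> \<le> \<phi> n y \<omega> \<and> \<phi> n y \<omega> \<le> 1"
    using qprod_pos[OF q] qprod_le_1[OF q] qprod_mono[OF q] by (simp add: \<phi>_eq less_imp_le)
  have small: "\<forall>\<epsilon>>0. \<exists>B. \<forall>n\<ge>1. \<forall>\<omega>\<in>space M. \<forall>x. \<eta> n \<omega> - x > B \<longrightarrow> \<phi> n x \<omega> < \<epsilon>"
    unfolding eta_def \<phi>_eq using qprod_uniformly_small[OF q] nonempty by meson
  have large: "\<forall>\<epsilon>>0. \<exists>B. \<forall>n\<ge>1. \<forall>\<omega>\<in>space M. \<forall>x. \<eta> n \<omega> - x < - B \<longrightarrow> \<phi> n x \<omega> > 1 - \<epsilon>"
    unfolding eta_def \<phi>_eq using qprod_uniformly_near_1[OF q] nonempty by meson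
  have jump: "\<exists>c>0. \<forall>n\<ge>1. \<forall>\<omega>\<in>space M. \<forall>x. x < \<eta> n \<omega> \<and> \<eta> n \<omega> \<le> x + 1 \<longrightarrow>
      \<phi> n (x + 1) \<omega> - \<phi> n x \<omega> \<ge> c"
    unfolding eta_def \<phi>_eq using qprod_uniform_jump[OF q] nonempty by meson
  have measurable: "\<eta> n \<in> borel_measurable M" "\<phi> n x \<in> borel_measurable M" if "1 \<le> n" for n x
  proof -
    have [measurable]: "Measurable.pred M (\<lambda>\<omega>. k \<in> J n \<omega>)" for k
      using meas[OF that] by (simp add: Measurable.pred_def)
    show "\<eta> n \<in> borel_measurable M"
      unfolding eta_def[abs_def] by measurable
    show "\<phi> n x \<in> borel_measurable M"
      unfolding \<phi>_eq[abs_def] by (rule measurable_qprod[OF q]) measurable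
  qed
  interpret kernel_sequence M \<eta> \<phi> F
    using \<open>prob_space M\<close> measurable mono small large jump F_def
    by (simp add: kernel_sequence_def kernel_sequence_axioms_def)
  show ?thesis
    using mono small large jump asymp_equiv_sequences by blast
qed

end
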